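(* Let $x\in\mathbf{Q}_2$, $v\in V$ with $vx=x$, and $\varphi\in\mathrm{Stab}_N(\mathbf{Q}_2)$. Then $(\varphi v\varphi^{-1})'(\varphi(x))=v'(x)$.
   Context: Cantor space $\mathfrak C=\{0,1\}^{\mathbf N}$; $C_m=\{m\cdot x\}$ for a finite word $m$. Thompson's group $V$: homeomorphisms $v$ of $\mathfrak C$ with $v(m_kx)=m'_kx$ for two partitions $\mathfrak C=\bigsqcup_k C_{m_k}=\bigsqcup_k C_{m'_k}$; slope $v'(x)=2^{|m_k|-|m'_k|}$ for $x\in C_{m_k}$. $\mathbf{Q}_2\subset\mathfrak C$ is the set of eventually-zero sequences. $\mathrm{Stab}_N(\mathbf{Q}_2)=\{\varphi\in\mathrm{Homeo}(\mathfrak C):\varphi V\varphi^{-1}=V,\ \varphi(\mathbf{Q}_2)=\mathbf{Q}_2\}$. *)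

theory Defs
  imports "HOL-Analysis.Analysis"
begin

text \<open>Cantor space: infinite binary sequences, with digit 0 = False, 1 = True.\<close>
type_synonym cantor = "nat \<Rightarrow> bool"

definition cantor_top :: "cantor topology" where
  "cantor_top = product_topology (\<lambda>_. discrete_topology (UNIV :: bool set)) UNIV"

definition wcat :: "bool list \<Rightarrow> cantor \<Rightarrow> cantor" where
  "wcat m x = (\<lambda>n. if n < length m then m ! n else x (n - length m))"

definition cyl :: "bool list \<Rightarrow> cantor set" where
  "cyl m = range (wcat m)"

definition cyl_partition :: "bool list list \<Rightarrow> bool" where
  "cyl_partition ms \<longleftrightarrow> distinct ms \<and> (\<Union>m\<in>set ms. cyl m) = UNIV \<and>
     (\<forall>i<length ms. \<forall>j<length ms. i \<noteq> j \<longrightarrow> cyl (ms ! i) \<inter> cyl (ms ! j) = {})"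

definition thompson_rep :: "bool list list \<Rightarrow> bool list list \<Rightarrow> (cantor \<Rightarrow> cantor) \<Rightarrow> bool" where
  "thompson_rep ms ms' v \<longleftrightarrow> length ms = length ms' \<and> cyl_partition ms \<and> cyl_partition ms' \<and>
     (\<forall>k<length ms. \<forall>x. v (wcat (ms ! k) x) = wcat (ms' ! k) x)"

definition thompsonV :: "(cantor \<Rightarrow> cantor) set" where
  "thompsonV = {v. homeomorphic_map cantor_top cantor_top v \<and> (\<exists>ms ms'. thompson_rep ms ms' v)}"

definition slope :: "(cantor \<Rightarrow> cantor) \<Rightarrow> cantor \<Rightarrow> real" where
  "slope v x = (THE s. \<exists>ms ms' k. thompson_rep ms ms' v \<and> k < length ms \<and> x \<in> cyl (ms ! k) \<and>
      s = 2 powr (real (length (ms ! k)) - real (length (ms' ! k))))"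

definition Q2 :: "cantor set" where
  "Q2 = {x. \<exists>N. \<forall>n\<ge>N. \<not> x n}"

definition StabN_Q2 :: "(cantor \<Rightarrow> cantor) set" where
  "StabN_Q2 = {\<phi>. homeomorphic_map cantor_top cantor_top \<phi> \<and>
      (\<lambda>v. \<phi> \<circ> v \<circ> inv \<phi>) ` thompsonV = thompsonV \<and> \<phi> ` Q2 = Q2}"

end

theory Submission
  imports Defs
begin

(* If x = p000... is fixed by a Thompson element v, then near x the map v acts as
   p 0^a y |-> p 0^b y, so v'(x) = 2^(a - b); call a - b the log-slope of v at x. Log-slopes add
   under composition, and two maps with the same log-slope at x agree on a neighbourhood of x.
   Fix u with log-slope 1 at x and let c be the log-slope of phi u phi^-1 at phi x. As v o u^b
   and u^a agree near x, and conjugation by phi preserves this, phi v phi^-1 has log-slope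
   (a - b) c at phi x. Applied to a preimage under conjugation of an element of log-slope 1 at
   phi x, this shows that c divides 1. Finally c > 0: a germ is expanding exactly when the point
   has no arbitrarily small forward-invariant neighbourhoods, which phi preserves. So c = 1. *)

definition seq_take :: "nat \<Rightarrow> cantor \<Rightarrow> bool list" where
  "seq_take n y = map y [0..<n]"

definition seq_drop :: "nat \<Rightarrow> cantor \<Rightarrow> cantor" where
  "seq_drop n y = (\<lambda>i. y (n + i))"

lemma length_seq_take [simp]: "length (seq_take n y) = n"
  by (simp add: seq_take_def)

lemma nth_seq_take [simp]: "i < n \<Longrightarrow> seq_take n y ! i = y i"
  by (simp add: seq_take_def)

lemma seq_take_eq_iff: "seq_take n y = w \<longleftrightarrow> length w = n \<and> (\<forall>i<n. y i = w ! i)"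
  by (auto simp: seq_take_def intro: nth_equalityI)

lemma seq_take_add: "seq_take (n + k) y = seq_take n y @ seq_take k (seq_drop n y)"
  by (auto simp: seq_take_eq_iff seq_drop_def nth_append)

lemma seq_take_wcat: "seq_take (length m + k) (wcat m y) = m @ seq_take k y"
  by (auto simp: seq_take_eq_iff wcat_def nth_append)

lemma seq_take_eventually_zero:
  "(\<forall>i\<ge>N. \<not> z i) \<Longrightarrow> N \<le> n \<Longrightarrow> seq_take (n + k) z = seq_take n z @ replicate k False"
  by (auto simp: seq_take_eq_iff nth_append)

lemma seq_drop_wcat [simp]: "seq_drop (length m) (wcat m y) = y"
  by (auto simp: seq_drop_def wcat_def)

lemma wcat_append: "wcat p (wcat q y) = wcat (p @ q) y"
  by (auto simp: wcat_def nth_append)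

lemma mem_cyl_iff: "y \<in> cyl w \<longleftrightarrow> (\<forall>i<length w. y i = w ! i)"
proof
  show "y \<in> cyl w \<Longrightarrow> \<forall>i<length w. y i = w ! i"
    by (auto simp: cyl_def wcat_def)
  assume "\<forall>i<length w. y i = w ! i"
  then have "y = wcat w (seq_drop (length w) y)"
    by (auto simp: wcat_def seq_drop_def)
  then show "y \<in> cyl w"
    unfolding cyl_def by blast
qed

lemma mem_cyl_iff_seq_take: "y \<in> cyl w \<longleftrightarrow> seq_take (length w) y = w"
  by (auto simp: mem_cyl_iff seq_take_eq_iff)

lemma wcat_in_cyl [simp]: "wcat w y \<in> cyl w"
  by (simp add: cyl_def)

lemma self_in_cyl_seq_take [simp]: "y \<in> cyl (seq_take n y)"
  by (simp add: mem_cyl_iff)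

lemma wcat_seq_drop_cyl: "y \<in> cyl w \<Longrightarrow> wcat w (seq_drop (length w) y) = y"
  by (auto simp: mem_cyl_iff wcat_def seq_drop_def)

lemma cyl_seq_take_antimono: "n \<le> m \<Longrightarrow> cyl (seq_take m y) \<subseteq> cyl (seq_take n y)"
  by (auto simp: mem_cyl_iff)

lemma cyl_same_length_eq: "length a = length b \<Longrightarrow> y \<in> cyl a \<Longrightarrow> y \<in> cyl b \<Longrightarrow> a = b"
  by (metis mem_cyl_iff_seq_take)

lemma mem_cyl_append: "y \<in> cyl (p @ q) \<longleftrightarrow> y \<in> cyl p \<and> seq_drop (length p) y \<in> cyl q"
  by (simp add: mem_cyl_iff_seq_take seq_take_add append_eq_conv_conj)

section \<open>The topology of Cantor space\<close>

lemma topspace_cantor_top [simp]: "topspace cantor_top = UNIV"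
  by (simp add: cantor_top_def)

lemma openin_cyl: "openin cantor_top (cyl w)"
proof -
  have cyl_eq: "cyl w = PiE UNIV (\<lambda>i. {b. i < length w \<longrightarrow> b = w ! i})"
    by (auto simp: mem_cyl_iff PiE_UNIV_domain Pi_iff)
  have "finite {i. {b. i < length w \<longrightarrow> b = w ! i} \<noteq> UNIV}"
    by (rule finite_subset[of _ "{..<length w}"]) auto
  then show ?thesis
    unfolding cantor_top_def cyl_eq openin_PiE_gen by (intro disjI2) simp
qed

lemma openin_cantor_top_contains_cyl:
  assumes "openin cantor_top U" "z \<in> U"
  obtains n where "cyl (seq_take n z) \<subseteq> U"
proof -
  have "\<exists>V. finite {i \<in> UNIV. V i \<noteq> topspace (discrete_topology UNIV)} \<and>
      (\<forall>i\<in>UNIV. openin (discrete_topology UNIV) (V i)) \<and> z \<in> PiE UNIV V \<and> PiE UNIV V \<subseteq> U"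
    using assms unfolding cantor_top_def openin_product_topology_alt by blast
  then obtain V where fin: "finite {i \<in> UNIV. V i \<noteq> topspace (discrete_topology UNIV)}"
    and V: "z \<in> PiE UNIV V" "PiE UNIV V \<subseteq> U"
    by blast
  have "finite {i. V i \<noteq> UNIV}"
    using fin by simp
  then obtain n where n: "{i. V i \<noteq> UNIV} \<subseteq> {..<n}"
    using finite_nat_iff_bounded by blast
  have "cyl (seq_take n z) \<subseteq> PiE UNIV V"
  proof
    fix y assume y: "y \<in> cyl (seq_take n z)"
    have "y i \<in> V i" for i
    proof (cases "V i = UNIV")
      case False
      with n have "i < n"
        by blast
      with y have "y i = z i"
        by (simp add: mem_cyl_iff)
      with PiE_mem[OF V(1) UNIV_I] show ?thesis
        by simp
    qed simp
    then show "y \<in> PiE UNIV V"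
      by (intro PiE_I) simp_all
  qed
  with V(2) that show ?thesis
    by (meson order_trans)
qed

lemma continuous_map_cantor_top_finite_dependence:
  assumes "\<And>n. \<exists>M. \<forall>y y'. seq_take M y = seq_take M y' \<longrightarrow> f y n = f y' n"
  shows "continuous_map cantor_top cantor_top f"
proof -
  have "openin cantor_top {y. f y n \<in> B}" for n B
  proof (subst openin_subopen, intro ballI)
    obtain M where M: "\<And>y y'. seq_take M y = seq_take M y' \<Longrightarrow> f y n = f y' n"
      using assms by blast
    fix y assume y: "y \<in> {y. f y n \<in> B}"
    have "cyl (seq_take M y) \<subseteq> {y. f y n \<in> B}"
    proof
      fix y' assume "y' \<in> cyl (seq_take M y)"
      then have "f y' n = f y n"
        by (intro M) (simp add: mem_cyl_iff_seq_take)
      with y show "y' \<in> {y. f y n \<in> B}"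
        by simp
    qed
    then show "\<exists>T. openin cantor_top T \<and> y \<in> T \<and> T \<subseteq> {y. f y n \<in> B}"
      using openin_cyl by (intro exI[of _ "cyl (seq_take M y)"]) simp
  qed
  then have "continuous_map cantor_top (discrete_topology UNIV) (\<lambda>y. f y n)" for n
    unfolding continuous_map_def by simp
  then have "continuous_map cantor_top (product_topology (\<lambda>_. discrete_topology UNIV) UNIV) f"
    unfolding continuous_map_componentwise_UNIV by blast
  then show ?thesis
    by (simp add: cantor_top_def)
qed

section \<open>Cylinder partitions and Thompson representatives\<close>

lemma cyl_partitionI:
  assumes "distinct ws" "\<And>y. \<exists>w\<in>set ws. y \<in> cyl w"
    and "\<And>y a b. a \<in> set ws \<Longrightarrow> b \<in> set ws \<Longrightarrow> y \<in> cyl a \<Longrightarrow> y \<in> cyl b \<Longrightarrow> a = b"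
  shows "cyl_partition ws"
  unfolding cyl_partition_def
proof (intro conjI allI impI)
  show "(\<Union>w\<in>set ws. cyl w) = UNIV"
    using assms(2) by blast
next
  fix i j assume ij: "i < length ws" "j < length ws" "i \<noteq> j"
  then have "ws ! i \<noteq> ws ! j"
    using assms(1) by (simp add: nth_eq_iff_index_eq)
  with ij show "cyl (ws ! i) \<inter> cyl (ws ! j) = {}"
    using assms(3) by (meson disjoint_iff nth_mem)
qed (fact assms(1))

lemma cyl_partition_cover:
  assumes "cyl_partition ws"
  obtains k where "k < length ws" "y \<in> cyl (ws ! k)"
proof -
  have "y \<in> (\<Union>w\<in>set ws. cyl w)"
    using assms by (simp add: cyl_partition_def)
  with that show ?thesis
    by (metis UN_E in_set_conv_nth)
qed

lemma cyl_partition_index_unique: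
  "cyl_partition ws \<Longrightarrow> i < length ws \<Longrightarrow> j < length ws \<Longrightarrow>
     y \<in> cyl (ws ! i) \<Longrightarrow> y \<in> cyl (ws ! j) \<Longrightarrow> i = j"
  unfolding cyl_partition_def by blast

lemma cyl_partition_unique:
  "cyl_partition ws \<Longrightarrow> a \<in> set ws \<Longrightarrow> b \<in> set ws \<Longrightarrow> y \<in> cyl a \<Longrightarrow> y \<in> cyl b \<Longrightarrow> a = b"
  by (metis cyl_partition_index_unique in_set_conv_nth)

lemma thompson_rep_apply:
  assumes "thompson_rep ms ms' v" "k < length ms" "y \<in> cyl (ms ! k)"
  shows "v y = wcat (ms' ! k) (seq_drop (length (ms ! k)) y)"
proof -
  have "v y = v (wcat (ms ! k) (seq_drop (length (ms ! k)) y))"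
    using assms(3) by (simp add: wcat_seq_drop_cyl)
  also have "\<dots> = wcat (ms' ! k) (seq_drop (length (ms ! k)) y)"
    using assms(1,2) by (simp add: thompson_rep_def)
  finally show ?thesis .
qed

lemma thompson_rep_exists:
  assumes "cyl_partition ms" "cyl_partition ms'" "length ms = length ms'"
  obtains v where "thompson_rep ms ms' v"
proof -
  define idx where "idx y = (THE k. k < length ms \<and> y \<in> cyl (ms ! k))" for y
  have idx: "idx (wcat (ms ! k) x) = k" if "k < length ms" for k x
    unfolding idx_def
    using that cyl_partition_index_unique[OF assms(1)] by (intro the_equality) auto
  define v where "v y = wcat (ms' ! idx y) (seq_drop (length (ms ! idx y)) y)" for y
  have "thompson_rep ms ms' v"
    using assms by (simp add: thompson_rep_def v_def idx)
  then show ?thesis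
    using that by blast
qed

lemma thompson_rep_inverse:
  assumes "thompson_rep ms ms' v" "thompson_rep ms' ms g"
  shows "g (v y) = y"
proof -
  have "cyl_partition ms"
    using assms(1) by (simp add: thompson_rep_def)
  then obtain k where k: "k < length ms" "y \<in> cyl (ms ! k)"
    using cyl_partition_cover by blast
  have "v y = wcat (ms' ! k) (seq_drop (length (ms ! k)) y)"
    using assms(1) k by (rule thompson_rep_apply)
  with assms k show ?thesis
    by (simp add: thompson_rep_def wcat_seq_drop_cyl)
qed

lemma continuous_map_thompson_rep:
  assumes rep: "thompson_rep ms ms' v"
  shows "continuous_map cantor_top cantor_top v"
proof (rule continuous_map_cantor_top_finite_dependence)
  fix n
  define L where "L = Max (length ` set ms)"
  have part: "cyl_partition ms"
    using rep by (simp add: thompson_rep_def)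
  have L: "length (ms ! k) \<le> L" if "k < length ms" for k
    unfolding L_def using that by (intro Max_ge) auto
  show "\<exists>M. \<forall>y y'. seq_take M y = seq_take M y' \<longrightarrow> v y n = v y' n"
  proof (intro exI allI impI)
    fix y y' assume "seq_take (n + L + 1) y = seq_take (n + L + 1) y'"
    then have agree: "y i = y' i" if "i < n + L + 1" for i
      using that by (metis nth_seq_take)
    obtain k where k: "k < length ms" "y \<in> cyl (ms ! k)"
      using part cyl_partition_cover by blast
    have k': "y' \<in> cyl (ms ! k)"
      using k agree L[OF k(1)] by (auto simp: mem_cyl_iff)
    show "v y n = v y' n"
      using agree L[OF k(1)]
      by (simp add: thompson_rep_apply[OF rep k] thompson_rep_apply[OF rep k(1) k'] wcat_def seq_drop_def)
  qed
qed

lemma homeomorphic_map_thompson_rep: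
  assumes rep: "thompson_rep ms ms' v"
  shows "homeomorphic_map cantor_top cantor_top v"
proof -
  have "cyl_partition ms'" "cyl_partition ms" "length ms' = length ms"
    using rep by (simp_all add: thompson_rep_def)
  then obtain g where g: "thompson_rep ms' ms g"
    by (rule thompson_rep_exists)
  have "homeomorphic_maps cantor_top cantor_top v g"
    unfolding homeomorphic_maps_def
    using continuous_map_thompson_rep[OF rep] continuous_map_thompson_rep[OF g]
      thompson_rep_inverse[OF rep g] thompson_rep_inverse[OF g rep] by simp
  then show ?thesis
    using homeomorphic_map_maps by blast
qed

lemma thompson_rep_in_thompsonV: "thompson_rep ms ms' v \<Longrightarrow> v \<in> thompsonV"
  unfolding thompsonV_def using homeomorphic_map_thompson_rep by blast

section \<open>Shift germs at eventually-zero points\<close>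

text \<open>With p = seq_take N z and z = p 0 0 0 ..., the map f acts near z as p 0^a y |-> p 0^b y,
  so its slope at z is 2^(a - b).\<close>

definition shift_germ :: "(cantor \<Rightarrow> cantor) \<Rightarrow> cantor \<Rightarrow> nat \<Rightarrow> nat \<Rightarrow> nat \<Rightarrow> bool" where
  "shift_germ f z N a b \<longleftrightarrow>
     (\<forall>i\<ge>N. \<not> z i) \<and> (\<forall>y. f (wcat (seq_take (N + a) z) y) = wcat (seq_take (N + b) z) y)"

lemma shift_germ_eventually_zero: "shift_germ f z N a b \<Longrightarrow> \<forall>i\<ge>N. \<not> z i"
  by (simp add: shift_germ_def)

lemma shift_germ_apply:
  "shift_germ f z N a b \<Longrightarrow> f (wcat (seq_take (N + a) z) y) = wcat (seq_take (N + b) z) y"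
  by (simp add: shift_germ_def)

lemma wcat_seq_take_eventually_zero:
  assumes "\<forall>i\<ge>N. \<not> z i" "N \<le> n"
  shows "wcat (seq_take n z) (\<lambda>_. False) = z"
proof
  fix i
  show "wcat (seq_take n z) (\<lambda>_. False) i = z i"
    using assms by (cases "i < n") (auto simp: wcat_def)
qed

lemma shift_germ_fixes: "shift_germ f z N a b \<Longrightarrow> f z = z"
  by (metis shift_germ_apply shift_germ_eventually_zero wcat_seq_take_eventually_zero le_add1)

lemma shift_germ_add:
  assumes g: "shift_germ f z N a b"
  shows "shift_germ f z N (a + k) (b + k)"
proof -
  have zero: "\<forall>i\<ge>N. \<not> z i"
    using g by (rule shift_germ_eventually_zero)
  have take: "seq_take (N + (c + k)) z = seq_take (N + c) z @ replicate k False" for c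
    using seq_take_eventually_zero[OF zero, of "N + c" k] by (simp add: add.assoc)
  show ?thesis
    using zero shift_germ_apply[OF g] by (simp add: shift_germ_def take flip: wcat_append)
qed

lemma shift_germ_mono:
  assumes "shift_germ f z N a b" "N \<le> M"
  shows "shift_germ f z M a b"
proof -
  obtain d where "M = N + d"
    using assms(2) le_Suc_ex by blast
  with shift_germ_add[OF assms(1), of d] show ?thesis
    by (simp add: shift_germ_def ac_simps)
qed

lemma shift_germ_comp:
  assumes "shift_germ f z N a b" "shift_germ g z N a' b'"
  shows "shift_germ (f \<circ> g) z N (a' + a) (b + b')"
proof -
  have "g (wcat (seq_take (N + (a' + a)) z) y) = wcat (seq_take (N + (a + b')) z) y" for y
    using shift_germ_apply[OF shift_germ_add[OF assms(2), of a]] by (simp add: ac_simps)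
  moreover have "f (wcat (seq_take (N + (a + b')) z) y) = wcat (seq_take (N + (b + b')) z) y" for y
    using shift_germ_apply[OF shift_germ_add[OF assms(1), of b']] .
  ultimately show ?thesis
    using assms(1) by (simp add: shift_germ_def)
qed

text \<open>The first True at or after position N sits at position s.\<close>

lemma wcat_seq_take_ones_inj:
  assumes zero: "\<forall>i\<ge>N. \<not> z i" and "N \<le> s" "N \<le> t"
    and eq: "wcat (seq_take s z) (\<lambda>_. True) = wcat (seq_take t z) (\<lambda>_. True)"
  shows "s = t"
proof -
  have "wcat (seq_take n z) (\<lambda>_. True) i \<longleftrightarrow> n \<le> i" if "N \<le> n" "N \<le> i" for n i
    using zero that by (auto simp: wcat_def)
  then have "s \<le> i \<longleftrightarrow> t \<le> i" if "N \<le> i" for i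
    using eq that \<open>N \<le> s\<close> \<open>N \<le> t\<close> by metis
  then show ?thesis
    using \<open>N \<le> s\<close> \<open>N \<le> t\<close> by (metis le_antisym order_refl)
qed

lemma shift_germ_unique:
  assumes g: "shift_germ f z N a b" and g': "shift_germ f z N' a' b'"
  shows "int a - int b = int a' - int b'"
proof -
  define M where "M = N + N'"
  have "shift_germ f z M (a + a') (b + a')"
    using shift_germ_add[OF shift_germ_mono[OF g]] M_def by simp
  moreover have "shift_germ f z M (a + a') (b' + a)"
    using shift_germ_add[OF shift_germ_mono[OF g'], of M a] M_def by (simp add: add.commute)
  ultimately have "wcat (seq_take (M + (b + a')) z) (\<lambda>_. True) = wcat (seq_take (M + (b' + a)) z) (\<lambda>_. True)"
    by (metis shift_germ_apply)
  then have "M + (b + a') = M + (b' + a)"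
    using shift_germ_eventually_zero[OF g] M_def by (intro wcat_seq_take_ones_inj) auto
  then show ?thesis
    by simp
qed

definition has_log_slope :: "(cantor \<Rightarrow> cantor) \<Rightarrow> cantor \<Rightarrow> int \<Rightarrow> bool" where
  "has_log_slope f z d \<longleftrightarrow> (\<exists>N a b. shift_germ f z N a b \<and> d = int a - int b)"

lemma has_log_slope_fixes: "has_log_slope f z d \<Longrightarrow> f z = z"
  unfolding has_log_slope_def using shift_germ_fixes by blast

lemma has_log_slope_unique: "has_log_slope f z d \<Longrightarrow> has_log_slope f z e \<Longrightarrow> d = e"
  unfolding has_log_slope_def using shift_germ_unique by blast

lemma has_log_slope_comp:
  assumes "has_log_slope f z d" "has_log_slope g z e"
  shows "has_log_slope (f \<circ> g) z (d + e)"
proof -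
  obtain N a b N' a' b' where f: "shift_germ f z N a b" "d = int a - int b"
    and g: "shift_germ g z N' a' b'" "e = int a' - int b'"
    using assms unfolding has_log_slope_def by blast
  have "shift_germ (f \<circ> g) z (N + N') (a' + a) (b + b')"
    using shift_germ_comp[OF shift_germ_mono[OF f(1) le_add1] shift_germ_mono[OF g(1) le_add2]] .
  moreover have "d + e = int (a' + a) - int (b + b')"
    using f(2) g(2) by simp
  ultimately show ?thesis
    unfolding has_log_slope_def by blast
qed

lemma has_log_slope_funpow:
  assumes "has_log_slope f z d"
  shows "has_log_slope (f ^^ n) z (int n * d)"
proof (induction n)
  case 0
  obtain N a b where "shift_germ f z N a b"
    using assms unfolding has_log_slope_def by blast
  then have "shift_germ id z N 0 0"
    by (simp add: shift_germ_def)
  then show ?case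
    unfolding has_log_slope_def by force
next
  case (Suc n)
  have "has_log_slope (f \<circ> f ^^ n) z (d + int n * d)"
    using assms Suc.IH by (rule has_log_slope_comp)
  moreover have "d + int n * d = int (Suc n) * d"
    by (simp add: algebra_simps)
  ultimately show ?case
    by (metis funpow.simps(2))
qed

definition germ_eq :: "(cantor \<Rightarrow> cantor) \<Rightarrow> (cantor \<Rightarrow> cantor) \<Rightarrow> cantor \<Rightarrow> bool" where
  "germ_eq f g z \<longleftrightarrow> (\<exists>n. \<forall>y\<in>cyl (seq_take n z). f y = g y)"

lemma has_log_slope_germ_eq:
  assumes "germ_eq f g z" "has_log_slope f z d"
  shows "has_log_slope g z d"
proof -
  obtain n where n: "\<And>y. y \<in> cyl (seq_take n z) \<Longrightarrow> f y = g y"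
    using assms(1) unfolding germ_eq_def by blast
  obtain N a b where g: "shift_germ f z N a b" and d: "d = int a - int b"
    using assms(2) unfolding has_log_slope_def by blast
  have g': "shift_germ f z (N + n) a b"
    using shift_germ_mono[OF g] by simp
  have "wcat (seq_take (N + n + a) z) y \<in> cyl (seq_take n z)" for y
    using cyl_seq_take_antimono[of n "N + n + a" z] wcat_in_cyl by fastforce
  then have "g (wcat (seq_take (N + n + a) z) y) = wcat (seq_take (N + n + b) z) y" for y
    using n shift_germ_apply[OF g'] by metis
  then have "shift_germ g z (N + n) a b"
    using shift_germ_eventually_zero[OF g'] by (simp add: shift_germ_def)
  with d show ?thesis
    unfolding has_log_slope_def by blast
qed

lemma germ_eq_if_has_log_slope:
  assumes "has_log_slope f z d" "has_log_slope g z d"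
  shows "germ_eq f g z"
proof -
  obtain N a b N' a' b' where f: "shift_germ f z N a b" and g: "shift_germ g z N' a' b'"
    and d: "int a - int b = int a' - int b'"
    using assms unfolding has_log_slope_def by blast
  define M where "M = N + N'"
  have f': "shift_germ f z M (a + a') (b + a')"
    using shift_germ_add[OF shift_germ_mono[OF f]] M_def by simp
  have "shift_germ g z M (a' + a) (b' + a)"
    using shift_germ_add[OF shift_germ_mono[OF g], of M a] M_def by simp
  moreover have "b' + a = b + a'"
    using d by linarith
  ultimately have g': "shift_germ g z M (a + a') (b + a')"
    by (metis add.commute)
  have "f y = g y" if "y \<in> cyl (seq_take (M + (a + a')) z)" for y
  proof -
    have "y = wcat (seq_take (M + (a + a')) z) (seq_drop (M + (a + a')) y)"
      using wcat_seq_drop_cyl[OF that] by simp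
    then show ?thesis
      using shift_germ_apply[OF f'] shift_germ_apply[OF g'] by metis
  qed
  then show ?thesis
    unfolding germ_eq_def by blast
qed

section \<open>Conjugation by homeomorphisms\<close>

lemma bij_if_homeomorphic_map_cantor:
  assumes "homeomorphic_map cantor_top cantor_top \<phi>"
  shows "bij \<phi>"
  using homeomorphic_imp_injective_map[OF assms] homeomorphic_imp_surjective_map[OF assms]
  by (simp add: bij_def)

lemma conj_comp: "inj \<phi> \<Longrightarrow> \<phi> \<circ> (f \<circ> g) \<circ> inv \<phi> = (\<phi> \<circ> f \<circ> inv \<phi>) \<circ> (\<phi> \<circ> g \<circ> inv \<phi>)"
  by (simp add: fun_eq_iff)

lemma conj_funpow: "bij \<phi> \<Longrightarrow> \<phi> \<circ> f ^^ n \<circ> inv \<phi> = (\<phi> \<circ> f \<circ> inv \<phi>) ^^ n"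
proof (induction n)
  case 0
  then show ?case
    by (simp add: fun_eq_iff bij_is_surj surj_f_inv_f)
next
  case (Suc n)
  then show ?case
    by (metis bij_is_inj conj_comp funpow.simps(2))
qed

lemma germ_eq_conj:
  assumes h: "homeomorphic_map cantor_top cantor_top \<phi>" and "germ_eq f g z"
  shows "germ_eq (\<phi> \<circ> f \<circ> inv \<phi>) (\<phi> \<circ> g \<circ> inv \<phi>) (\<phi> z)"
proof -
  obtain n where n: "\<And>y. y \<in> cyl (seq_take n z) \<Longrightarrow> f y = g y"
    using assms(2) unfolding germ_eq_def by blast
  have "openin cantor_top (\<phi> ` cyl (seq_take n z))"
    using homeomorphic_imp_open_map[OF h] openin_cyl unfolding open_map_def by blast
  moreover have "\<phi> z \<in> \<phi> ` cyl (seq_take n z)"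
    by simp
  ultimately obtain m where m: "cyl (seq_take m (\<phi> z)) \<subseteq> \<phi> ` cyl (seq_take n z)"
    by (rule openin_cantor_top_contains_cyl)
  have "\<phi> (f (inv \<phi> y)) = \<phi> (g (inv \<phi> y))" if y: "y \<in> cyl (seq_take m (\<phi> z))" for y
  proof -
    obtain c where "c \<in> cyl (seq_take n z)" "y = \<phi> c"
      using m y by blast
    moreover have "inv \<phi> (\<phi> c) = c"
      using bij_if_homeomorphic_map_cantor[OF h] by (simp add: bij_is_inj)
    ultimately show ?thesis
      using n by simp
  qed
  then show ?thesis
    unfolding germ_eq_def by auto
qed

lemma has_log_slope_conj_mult:
  assumes h: "homeomorphic_map cantor_top cantor_top \<phi>"
    and u: "has_log_slope u x 1" and c: "has_log_slope (\<phi> \<circ> u \<circ> inv \<phi>) (\<phi> x) c"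
    and f: "has_log_slope f x d" and e: "has_log_slope (\<phi> \<circ> f \<circ> inv \<phi>) (\<phi> x) e"
  shows "e = d * c"
proof -
  define p q where "p = nat d" and "q = nat (- d)"
  let ?F = "\<phi> \<circ> f \<circ> inv \<phi>" and ?U = "\<phi> \<circ> u \<circ> inv \<phi>"
  have pq: "d + int q = int p"
    unfolding p_def q_def by simp
  have "has_log_slope (f \<circ> u ^^ q) x (int p)"
    using has_log_slope_comp[OF f has_log_slope_funpow[OF u, of q]] pq by simp
  moreover have "has_log_slope (u ^^ p) x (int p)"
    using has_log_slope_funpow[OF u] by simp
  ultimately have "germ_eq (f \<circ> u ^^ q) (u ^^ p) x"
    by (rule germ_eq_if_has_log_slope)
  then have "germ_eq (\<phi> \<circ> (f \<circ> u ^^ q) \<circ> inv \<phi>) (\<phi> \<circ> u ^^ p \<circ> inv \<phi>) (\<phi> x)"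
    by (rule germ_eq_conj[OF h])
  then have "germ_eq (?F \<circ> ?U ^^ q) (?U ^^ p) (\<phi> x)"
    using bij_if_homeomorphic_map_cantor[OF h] by (simp only: bij_is_inj conj_comp conj_funpow)
  moreover have "has_log_slope (?F \<circ> ?U ^^ q) (\<phi> x) (e + int q * c)"
    by (rule has_log_slope_comp[OF e has_log_slope_funpow[OF c]])
  ultimately have "has_log_slope (?U ^^ p) (\<phi> x) (e + int q * c)"
    by (rule has_log_slope_germ_eq)
  then have "e + int q * c = int p * c"
    using has_log_slope_funpow[OF c] by (rule has_log_slope_unique)
  then have "e = int p * c - int q * c"
    by linarith
  also have "\<dots> = d * c"
    using pq by (simp flip: left_diff_distrib)
  finally show ?thesis .
qed

section \<open>Forward-invariant neighbourhoods\<close>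

definition invariant_nbhd_basis :: "(cantor \<Rightarrow> cantor) \<Rightarrow> cantor \<Rightarrow> bool" where
  "invariant_nbhd_basis f z \<longleftrightarrow> (\<forall>W. openin cantor_top W \<and> z \<in> W \<longrightarrow>
      (\<exists>U. openin cantor_top U \<and> z \<in> U \<and> U \<subseteq> W \<and> f ` U \<subseteq> U))"

lemma invariant_nbhd_basis_if_log_slope_nonpos:
  assumes "has_log_slope f z d" "d \<le> 0"
  shows "invariant_nbhd_basis f z"
  unfolding invariant_nbhd_basis_def
proof (intro allI impI)
  obtain N a b where g: "shift_germ f z N a b" and ab: "a \<le> b"
    using assms unfolding has_log_slope_def by auto
  fix W assume "openin cantor_top W \<and> z \<in> W"
  then obtain n where n: "cyl (seq_take n z) \<subseteq> W"
    using openin_cantor_top_contains_cyl by blast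
  define U where "U = cyl (seq_take (N + n + a) z)"
  have g': "shift_germ f z (N + n) a b"
    using shift_germ_mono[OF g] by simp
  have "U \<subseteq> W"
    unfolding U_def using cyl_seq_take_antimono[of n "N + n + a" z] n by simp
  moreover have "f y \<in> U" if "y \<in> U" for y
  proof -
    have "f y = wcat (seq_take (N + n + b) z) (seq_drop (N + n + a) y)"
      using shift_germ_apply[OF g'] wcat_seq_drop_cyl[of y] that unfolding U_def by (metis length_seq_take)
    then have "f y \<in> cyl (seq_take (N + n + b) z)"
      by simp
    then show ?thesis
      unfolding U_def using cyl_seq_take_antimono[of "N + n + a" "N + n + b" z] ab by auto
  qed
  ultimately show "\<exists>U. openin cantor_top U \<and> z \<in> U \<and> U \<subseteq> W \<and> f ` U \<subseteq> U"
    using openin_cyl unfolding U_def by (intro exI[of _ U]) (auto simp: U_def)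
qed

text \<open>An expanding germ pushes the points z|(N + i) 1 1 1 ... outwards: the one with the
  least i inside a forward-invariant U would be mapped to one with smaller i.\<close>

lemma not_invariant_nbhd_basis_if_log_slope_pos:
  assumes "has_log_slope f z d" "0 < d"
  shows "\<not> invariant_nbhd_basis f z"
proof
  obtain N a b where g: "shift_germ f z N a b" and ab: "b < a"
    using assms unfolding has_log_slope_def by auto
  have zero: "\<forall>i\<ge>N. \<not> z i"
    using g by (rule shift_germ_eventually_zero)
  assume "invariant_nbhd_basis f z"
  then obtain U where U: "openin cantor_top U" "z \<in> U" "U \<subseteq> cyl (seq_take (N + a) z)" "f ` U \<subseteq> U"
    using openin_cyl self_in_cyl_seq_take unfolding invariant_nbhd_basis_def by meson
  obtain m where m: "cyl (seq_take m z) \<subseteq> U"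
    using openin_cantor_top_contains_cyl U(1,2) by blast
  define s where "s i = wcat (seq_take (N + i) z) (\<lambda>_. True)" for i
  have a_le: "a \<le> i" if "s i \<in> U" for i
  proof (rule ccontr)
    assume "\<not> a \<le> i"
    then have "s i (N + i) = z (N + i)"
      using U(3) that by (auto simp: mem_cyl_iff)
    moreover have "s i (N + i)"
      by (simp add: s_def wcat_def)
    ultimately show False
      using zero by simp
  qed
  have "s (a + m) \<in> cyl (seq_take m z)"
    using cyl_seq_take_antimono[of m "N + (a + m)" z] unfolding s_def by auto
  then have "s (a + m) \<in> U"
    using m by blast
  define i where "i = (LEAST i. s i \<in> U)"
  have i: "s i \<in> U"
    unfolding i_def by (rule LeastI) fact
  then obtain j where j: "i = a + j"
    using a_le le_Suc_ex by blast
  have "f (s i) = s (b + j)"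
    unfolding s_def j using shift_germ_apply[OF shift_germ_add[OF g]] by simp
  then have "s (b + j) \<in> U"
    using i U(4) by (metis image_subset_iff)
  then have "i \<le> b + j"
    unfolding i_def by (rule Least_le)
  with j ab show False
    by simp
qed

lemma invariant_nbhd_basis_conj:
  assumes h: "homeomorphic_map cantor_top cantor_top \<phi>"
    and inv_nbhd: "invariant_nbhd_basis (\<phi> \<circ> f \<circ> inv \<phi>) (\<phi> z)"
  shows "invariant_nbhd_basis f z"
  unfolding invariant_nbhd_basis_def
proof (intro allI impI)
  have inj: "inj \<phi>"
    using bij_if_homeomorphic_map_cantor[OF h] by (rule bij_is_inj)
  fix W assume W: "openin cantor_top W \<and> z \<in> W"
  have "openin cantor_top (\<phi> ` W) \<and> \<phi> z \<in> \<phi> ` W"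
    using homeomorphic_imp_open_map[OF h] W unfolding open_map_def by blast
  then obtain U' where U': "openin cantor_top U'" "\<phi> z \<in> U'" "U' \<subseteq> \<phi> ` W"
    "(\<phi> \<circ> f \<circ> inv \<phi>) ` U' \<subseteq> U'"
    using inv_nbhd unfolding invariant_nbhd_basis_def by meson
  define U where "U = {y \<in> topspace cantor_top. \<phi> y \<in> U'}"
  have "openin cantor_top U"
    unfolding U_def using homeomorphic_imp_continuous_map[OF h] U'(1)
    by (rule openin_continuous_map_preimage)
  moreover have "U \<subseteq> W"
  proof
    fix y assume "y \<in> U"
    then have "\<phi> y \<in> \<phi> ` W"
      using U'(3) unfolding U_def by blast
    then show "y \<in> W"
      using inj by (simp add: inj_image_mem_iff)
  qed
  moreover have "f ` U \<subseteq> U"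
  proof
    fix y assume "y \<in> f ` U"
    then obtain y' where "y' \<in> U" "y = f y'"
      by blast
    then have "(\<phi> \<circ> f \<circ> inv \<phi>) (\<phi> y') \<in> U'"
      using U'(4) unfolding U_def by blast
    with \<open>y = f y'\<close> show "y \<in> U"
      using inj unfolding U_def by simp
  qed
  moreover have "z \<in> U"
    using U'(2) unfolding U_def by simp
  ultimately show "\<exists>U. openin cantor_top U \<and> z \<in> U \<and> U \<subseteq> W \<and> f ` U \<subseteq> U"
    by blast
qed

lemma has_log_slope_conj_pos:
  assumes h: "homeomorphic_map cantor_top cantor_top \<phi>"
    and f: "has_log_slope f z d" "0 < d" and e: "has_log_slope (\<phi> \<circ> f \<circ> inv \<phi>) (\<phi> z) e"
  shows "0 < e"
proof (rule ccontr)
  assume "\<not> 0 < e"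
  then have "invariant_nbhd_basis (\<phi> \<circ> f \<circ> inv \<phi>) (\<phi> z)"
    by (intro invariant_nbhd_basis_if_log_slope_nonpos[OF e]) simp
  then have "invariant_nbhd_basis f z"
    by (rule invariant_nbhd_basis_conj[OF h])
  with not_invariant_nbhd_basis_if_log_slope_pos[OF f] show False
    by contradiction
qed

section \<open>Log-slopes of Thompson elements\<close>

lemma thompson_rep_shift_germ:
  assumes rep: "thompson_rep ms ms' f" and k: "k < length ms" and z: "z \<in> cyl (ms ! k)"
    and fz: "f z = z" and zero: "\<forall>i\<ge>N. \<not> z i"
  shows "shift_germ f z N (length (ms ! k)) (length (ms' ! k))"
proof -
  have apply_k: "f (wcat (ms ! k) y) = wcat (ms' ! k) y" for y
    using rep k by (simp add: thompson_rep_def)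
  define r where "r = seq_drop (length (ms ! k)) z"
  have "z = wcat (ms ! k) r"
    unfolding r_def using wcat_seq_drop_cyl[OF z] by simp
  moreover from this have "z = wcat (ms' ! k) r"
    using fz apply_k by metis
  ultimately have "seq_take (N + length (ms ! k)) z = ms ! k @ seq_take N r"
    "seq_take (N + length (ms' ! k)) z = ms' ! k @ seq_take N r"
    using seq_take_wcat by (metis add.commute)+
  then show ?thesis
    using zero apply_k by (simp add: shift_germ_def flip: wcat_append)
qed

lemma thompsonV_has_log_slope:
  assumes "f \<in> thompsonV" "f z = z" "z \<in> Q2"
  obtains d where "has_log_slope f z d"
proof -
  obtain ms ms' where rep: "thompson_rep ms ms' f"
    using assms(1) unfolding thompsonV_def by blast
  then obtain k where k: "k < length ms" "z \<in> cyl (ms ! k)"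
    using cyl_partition_cover unfolding thompson_rep_def by blast
  obtain N where "\<forall>i\<ge>N. \<not> z i"
    using assms(3) unfolding Q2_def by blast
  with rep k assms(2) have "shift_germ f z N (length (ms ! k)) (length (ms' ! k))"
    by (intro thompson_rep_shift_germ)
  with that show ?thesis
    unfolding has_log_slope_def by blast
qed

text \<open>The slope is well defined at a fixed point in Q2 because every representative pair of
  partitions yields a shift germ there.\<close>

lemma slope_eq_log_slope:
  assumes fV: "f \<in> thompsonV" and fz: "f z = z" and d: "has_log_slope f z d"
  shows "slope f z = 2 powr d"
proof -
  obtain N a b where g: "shift_germ f z N a b" and d_eq: "d = int a - int b"
    using d unfolding has_log_slope_def by blast
  have exponent: "real (length (ms ! k)) - real (length (ms' ! k)) = d"
    if "thompson_rep ms ms' f" "k < length ms" "z \<in> cyl (ms ! k)" for ms ms' k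
  proof -
    have "int (length (ms ! k)) - int (length (ms' ! k)) = int a - int b"
      using shift_germ_unique[OF thompson_rep_shift_germ[OF that fz shift_germ_eventually_zero[OF g]] g] .
    then show ?thesis
      using d_eq by linarith
  qed
  obtain ms ms' where rep: "thompson_rep ms ms' f"
    using fV unfolding thompsonV_def by blast
  then obtain k where k: "k < length ms" "z \<in> cyl (ms ! k)"
    using cyl_partition_cover unfolding thompson_rep_def by blast
  show ?thesis
    unfolding slope_def
  proof (rule the_equality)
    show "\<exists>ms ms' k. thompson_rep ms ms' f \<and> k < length ms \<and> z \<in> cyl (ms ! k) \<and>
        2 powr d = 2 powr (real (length (ms ! k)) - real (length (ms' ! k)))"
      using rep k exponent[OF rep k] by metis
  next
    fix s
    assume "\<exists>ms ms' k. thompson_rep ms ms' f \<and> k < length ms \<and> z \<in> cyl (ms ! k) \<and>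
        s = 2 powr (real (length (ms ! k)) - real (length (ms' ! k)))"
    then show "s = 2 powr d"
      using exponent by metis
  qed
qed

section \<open>An element of log-slope one at a given point of Q2\<close>

definition other_words :: "bool list \<Rightarrow> bool list list" where
  "other_words p = filter (\<lambda>w. w \<noteq> p) (List.n_lists (length p) [False, True])"

lemma set_other_words: "set (other_words p) = {w. length w = length p \<and> w \<noteq> p}"
  unfolding other_words_def by (auto simp: set_n_lists)

lemma cyl_partition_refine:
  assumes qs: "cyl_partition qs" and nonempty: "[] \<notin> set qs"
  shows "cyl_partition (map ((@) p) qs @ other_words p)" (is "cyl_partition ?ws")
proof (rule cyl_partitionI)
  have "distinct (map ((@) p) qs)"
    using qs by (simp add: cyl_partition_def distinct_map inj_on_def)
  moreover have "distinct (other_words p)"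
    by (simp add: other_words_def distinct_n_lists)
  moreover have "set (map ((@) p) qs) \<inter> set (other_words p) = {}"
    using nonempty by (auto simp: set_other_words)
  ultimately show "distinct ?ws"
    by simp
next
  fix y
  show "\<exists>w\<in>set ?ws. y \<in> cyl w"
  proof (cases "y \<in> cyl p")
    case True
    obtain k where "k < length qs" "seq_drop (length p) y \<in> cyl (qs ! k)"
      using qs by (rule cyl_partition_cover)
    with True have "p @ qs ! k \<in> set (map ((@) p) qs)" "y \<in> cyl (p @ qs ! k)"
      by (simp_all add: mem_cyl_append)
    then show ?thesis
      by auto
  next
    case False
    then have "seq_take (length p) y \<in> set (other_words p)"
      by (simp add: set_other_words mem_cyl_iff_seq_take)
    then show ?thesis
      using self_in_cyl_seq_take by fastforce
  qed
next
  fix y a b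
  assume a: "a \<in> set ?ws" and b: "b \<in> set ?ws"
    and ya: "y \<in> cyl a" and yb: "y \<in> cyl b"
  show "a = b"
  proof (cases "y \<in> cyl p")
    case True
    have "w \<notin> set (other_words p)" if "y \<in> cyl w" for w
      using cyl_same_length_eq[OF _ that True] by (auto simp: set_other_words)
    then obtain qa qb where qa: "qa \<in> set qs" "a = p @ qa" and qb: "qb \<in> set qs" "b = p @ qb"
      using a b ya yb by auto
    have "seq_drop (length p) y \<in> cyl qa" "seq_drop (length p) y \<in> cyl qb"
      using ya yb qa(2) qb(2) by (simp_all add: mem_cyl_append)
    then have "qa = qb"
      by (rule cyl_partition_unique[OF qs qa(1) qb(1)])
    with qa(2) qb(2) show ?thesis
      by simp
  next
    case False
    then have other: "w \<in> set (other_words p)"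
      if "w \<in> set ?ws" "y \<in> cyl w" for w
      using that by (auto simp: mem_cyl_append)
    have "length a = length b"
      using other[OF a ya] other[OF b yb] by (simp add: set_other_words)
    then show ?thesis
      using ya yb by (rule cyl_same_length_eq)
  qed
qed

lemma cyl_partition_00_01_1: "cyl_partition [[False, False], [False, True], [True]]"
proof (rule cyl_partitionI)
  fix y
  show "\<exists>w\<in>set [[False, False], [False, True], [True]]. y \<in> cyl w"
    by (cases "y 0"; cases "y 1") (auto simp: mem_cyl_iff less_Suc_eq)
qed (auto simp: mem_cyl_iff less_Suc_eq)

lemma cyl_partition_0_10_11: "cyl_partition [[False], [True, False], [True, True]]"
proof (rule cyl_partitionI)
  fix y
  show "\<exists>w\<in>set [[False], [True, False], [True, True]]. y \<in> cyl w"
    by (cases "y 0"; cases "y 1") (auto simp: mem_cyl_iff less_Suc_eq)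
qed (auto simp: mem_cyl_iff less_Suc_eq)

text \<open>With p = seq_take N z, the element p00y |-> p0y, p01y |-> p10y, p1y |-> p11y, fixing all
  other cylinders of length N.\<close>

lemma exists_unit_log_slope:
  assumes "z \<in> Q2"
  obtains u where "u \<in> thompsonV" "has_log_slope u z 1"
proof -
  obtain N where zero: "\<forall>i\<ge>N. \<not> z i"
    using assms unfolding Q2_def by blast
  define p where "p = seq_take N z"
  define ms where "ms = map ((@) p) [[False, False], [False, True], [True]] @ other_words p"
  define ms' where "ms' = map ((@) p) [[False], [True, False], [True, True]] @ other_words p"
  have "cyl_partition ms"
    unfolding ms_def by (rule cyl_partition_refine[OF cyl_partition_00_01_1]) simp
  moreover have "cyl_partition ms'"
    unfolding ms'_def by (rule cyl_partition_refine[OF cyl_partition_0_10_11]) simp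
  moreover have "length ms = length ms'"
    by (simp add: ms_def ms'_def)
  ultimately obtain u where rep: "thompson_rep ms ms' u"
    by (rule thompson_rep_exists)
  have "u (wcat (p @ [False, False]) y) = wcat (p @ [False]) y" for y
    using rep unfolding thompson_rep_def by (force simp: ms_def ms'_def)
  moreover have "seq_take (N + 2) z = p @ [False, False]"
    using seq_take_eventually_zero[OF zero order_refl, of 2] unfolding p_def by (simp add: numeral_2_eq_2)
  moreover have "seq_take (N + 1) z = p @ [False]"
    using seq_take_eventually_zero[OF zero order_refl, of 1] unfolding p_def by simp
  ultimately have "shift_germ u z N 2 1"
    using zero by (simp add: shift_germ_def)
  then have "has_log_slope u z 1"
    unfolding has_log_slope_def by force
  with thompson_rep_in_thompsonV[OF rep] that show ?thesis
    by blast
qed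

section \<open>Conjugation by the normaliser\<close>

lemma StabN_Q2_homeomorphic_map: "\<phi> \<in> StabN_Q2 \<Longrightarrow> homeomorphic_map cantor_top cantor_top \<phi>"
  by (simp add: StabN_Q2_def)

lemma StabN_Q2_conj_thompsonV:
  assumes "\<phi> \<in> StabN_Q2" "f \<in> thompsonV"
  shows "\<phi> \<circ> f \<circ> inv \<phi> \<in> thompsonV"
proof -
  have "(\<lambda>f. \<phi> \<circ> f \<circ> inv \<phi>) ` thompsonV = thompsonV"
    using assms(1) unfolding StabN_Q2_def by blast
  with assms(2) show ?thesis
    by blast
qed

lemma StabN_Q2_conj_preimage:
  assumes "\<phi> \<in> StabN_Q2" "g \<in> thompsonV"
  obtains f where "f \<in> thompsonV" "g = \<phi> \<circ> f \<circ> inv \<phi>"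
proof -
  have "(\<lambda>f. \<phi> \<circ> f \<circ> inv \<phi>) ` thompsonV = thompsonV"
    using assms(1) unfolding StabN_Q2_def by blast
  with assms(2) that show ?thesis
    by blast
qed

lemma StabN_Q2_image_Q2:
  assumes "\<phi> \<in> StabN_Q2" "x \<in> Q2"
  shows "\<phi> x \<in> Q2"
proof -
  have "\<phi> ` Q2 = Q2"
    using assms(1) unfolding StabN_Q2_def by blast
  with assms(2) show ?thesis
    by blast
qed

lemma StabN_Q2_conj_fixes:
  assumes "\<phi> \<in> StabN_Q2" "f x = x"
  shows "(\<phi> \<circ> f \<circ> inv \<phi>) (\<phi> x) = \<phi> x"
  using bij_if_homeomorphic_map_cantor[OF StabN_Q2_homeomorphic_map[OF assms(1)]] assms(2)
  by (simp add: bij_is_inj)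

lemma StabN_Q2_conj_has_log_slope:
  assumes "\<phi> \<in> StabN_Q2" "x \<in> Q2" "f \<in> thompsonV" "f x = x"
  obtains e where "has_log_slope (\<phi> \<circ> f \<circ> inv \<phi>) (\<phi> x) e"
  using StabN_Q2_conj_thompsonV[OF assms(1,3)] StabN_Q2_conj_fixes[of \<phi> f x, OF assms(1,4)]
    StabN_Q2_image_Q2[OF assms(1,2)] by (rule thompsonV_has_log_slope)

lemma has_log_slope_conj_unit:
  assumes \<phi>: "\<phi> \<in> StabN_Q2" and x: "x \<in> Q2" and u: "u \<in> thompsonV" "has_log_slope u x 1"
  shows "has_log_slope (\<phi> \<circ> u \<circ> inv \<phi>) (\<phi> x) 1"
proof -
  have h: "homeomorphic_map cantor_top cantor_top \<phi>"
    using \<phi> by (rule StabN_Q2_homeomorphic_map)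
  obtain c where c: "has_log_slope (\<phi> \<circ> u \<circ> inv \<phi>) (\<phi> x) c"
    using \<phi> x u(1) has_log_slope_fixes[OF u(2)] by (rule StabN_Q2_conj_has_log_slope)
  obtain u' where u': "u' \<in> thompsonV" "has_log_slope u' (\<phi> x) 1"
    using StabN_Q2_image_Q2[OF \<phi> x] by (rule exists_unit_log_slope)
  obtain t where t: "t \<in> thompsonV" "u' = \<phi> \<circ> t \<circ> inv \<phi>"
    using \<phi> u'(1) by (rule StabN_Q2_conj_preimage)
  have "t x = x"
    using has_log_slope_fixes[OF u'(2)] bij_if_homeomorphic_map_cantor[OF h] t(2)
    by (simp add: bij_is_inj inj_eq)
  obtain d where d: "has_log_slope t x d"
    using t(1) \<open>t x = x\<close> x by (rule thompsonV_has_log_slope)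
  have "1 = d * c"
    using h u(2) c d u'(2)[unfolded t(2)] by (rule has_log_slope_conj_mult)
  moreover have "0 < c"
    by (rule has_log_slope_conj_pos[OF h u(2) _ c]) simp
  ultimately have "c = 1"
    by (metis mult.commute pos_zmult_eq_1_iff)
  with c show ?thesis
    by simp
qed

lemma has_log_slope_conj_StabN_Q2:
  assumes \<phi>: "\<phi> \<in> StabN_Q2" and x: "x \<in> Q2" and f: "f \<in> thompsonV" "has_log_slope f x d"
  shows "has_log_slope (\<phi> \<circ> f \<circ> inv \<phi>) (\<phi> x) d"
proof -
  obtain e where e: "has_log_slope (\<phi> \<circ> f \<circ> inv \<phi>) (\<phi> x) e"
    using \<phi> x f(1) has_log_slope_fixes[OF f(2)] by (rule StabN_Q2_conj_has_log_slope)
  obtain u where u: "u \<in> thompsonV" "has_log_slope u x 1"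
    using x by (rule exists_unit_log_slope)
  have "e = d * 1"
    using StabN_Q2_homeomorphic_map[OF \<phi>] u(2) has_log_slope_conj_unit[OF \<phi> x u] f(2) e
    by (rule has_log_slope_conj_mult)
  with e show ?thesis
    by simp
qed

theorem mainTheorem6:
  assumes "x \<in> Q2" and "v \<in> thompsonV" and "v x = x" and "\<phi> \<in> StabN_Q2"
  shows "slope (\<phi> \<circ> v \<circ> inv \<phi>) (\<phi> x) = slope v x"
proof -
  obtain d where d: "has_log_slope v x d"
    using assms(2,3,1) by (rule thompsonV_has_log_slope)
  have "slope (\<phi> \<circ> v \<circ> inv \<phi>) (\<phi> x) = 2 powr d"
    using StabN_Q2_conj_thompsonV[OF assms(4,2)] StabN_Q2_conj_fixes[of \<phi> v x, OF assms(4,3)]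
      has_log_slope_conj_StabN_Q2[OF assms(4,1,2) d]
    by (rule slope_eq_log_slope)
  also have "\<dots> = slope v x"
    using assms(2,3) d by (rule slope_eq_log_slope[symmetric])
  finally show ?thesis .
qed

end
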